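(* Let $G$ be a group having a finite normal subgroup $F$ such that $G/F$ is a finitely generated abelian group. If for some prime $p$ the group $G$ is residually $\mathcal{F}_p$, then $G$ is conjugacy $\mathcal{F}_p$-separable.
   Context: $\mathcal{F}_p$ denotes the class of all finite $p$-groups. $G$ is residually $\mathcal{F}_p$ if for every non-identity $a\in G$ there is a homomorphism $\varphi$ of $G$ onto a finite $p$-group with $a\varphi\neq 1$. $G$ is conjugacy $\mathcal{F}_p$-separable if whenever $a,b\in G$ are not conjugate in $G$, there is a homomorphism $\varphi$ of $G$ onto a finite $p$-group $X$ such that $a\varphi$ and $b\varphi$ are not conjugate in $X$. *)

theory Defs
  imports "HOL-Algebra.Algebra"
begin

definition finite_p_group :: "('b, 'c) monoid_scheme \<Rightarrow> nat \<Rightarrow> bool" where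
  "finite_p_group K p \<longleftrightarrow> group K \<and> finite (carrier K) \<and> (\<exists>n. card (carrier K) = p ^ n)"

text \<open>Target groups are taken with carrier type
  'a set: every homomorphic image of G is isomorphic to a quotient G Mod N, whose
  elements are of type 'a set, so this loses no generality.\<close>
definition residually_Fp :: "('a, 'c) monoid_scheme \<Rightarrow> nat \<Rightarrow> bool" where
  "residually_Fp G p \<longleftrightarrow>
     (\<forall>a \<in> carrier G. a \<noteq> \<one>\<^bsub>G\<^esub> \<longrightarrow>
        (\<exists>(K :: 'a set monoid) \<phi>. finite_p_group K p \<and> \<phi> \<in> hom G K \<and>
            \<phi> ` carrier G = carrier K \<and> \<phi> a \<noteq> \<one>\<^bsub>K\<^esub>))"

definition conjugate_in :: "('a, 'c) monoid_scheme \<Rightarrow> 'a \<Rightarrow> 'a \<Rightarrow> bool" where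
  "conjugate_in G a b \<longleftrightarrow> (\<exists>g \<in> carrier G. b = g \<otimes>\<^bsub>G\<^esub> a \<otimes>\<^bsub>G\<^esub> inv\<^bsub>G\<^esub> g)"

definition conjugacy_Fp_separable :: "('a, 'c) monoid_scheme \<Rightarrow> nat \<Rightarrow> bool" where
  "conjugacy_Fp_separable G p \<longleftrightarrow>
     (\<forall>a \<in> carrier G. \<forall>b \<in> carrier G. \<not> conjugate_in G a b \<longrightarrow>
        (\<exists>(K :: 'a set monoid) \<phi>. finite_p_group K p \<and> \<phi> \<in> hom G K \<and>
            \<phi> ` carrier G = carrier K \<and> \<not> conjugate_in K (\<phi> a) (\<phi> b)))"

definition finitely_generated_group :: "('b, 'c) monoid_scheme \<Rightarrow> bool" where
  "finitely_generated_group H \<longleftrightarrow>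
     (\<exists>S. finite S \<and> S \<subseteq> carrier H \<and> generate H S = carrier H)"

end

theory Submission
  imports Defs "HOL-Computational_Algebra.Primes"
begin

text \<open>Since \<open>G/F\<close> is abelian, every conjugate of \<open>a\<close> lies in the coset \<open>F a\<close>, so conjugacy
  classes of \<open>G\<close> are finite. In a residually
  \<open>\<F>\<^sub>p\<close> group with finite conjugacy classes, if \<open>b\<close> is not conjugate to \<open>a\<close>, the finitely many
  elements \<open>b c\<^sup>-\<^sup>1\<close> (\<open>c\<close> conjugate to \<open>a\<close>) are nontrivial. Intersecting the kernels that
  detect them gives one normal subgroup \<open>M\<close> of \<open>p\<close>-power index avoiding all of them, and then
  the images of \<open>a\<close> and \<open>b\<close> are not conjugate in the \<open>p\<close>-group \<open>G/M\<close>.\<close>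

definition conjugacy_class :: "('a, 'c) monoid_scheme \<Rightarrow> 'a \<Rightarrow> 'a set" where
  "conjugacy_class G a = {g \<otimes>\<^bsub>G\<^esub> a \<otimes>\<^bsub>G\<^esub> inv\<^bsub>G\<^esub> g | g. g \<in> carrier G}"

definition Fp_normal_subgroup :: "('a, 'c) monoid_scheme \<Rightarrow> nat \<Rightarrow> 'a set \<Rightarrow> bool" where
  "Fp_normal_subgroup G p N \<longleftrightarrow> N \<lhd> G \<and> finite_p_group (G Mod N) p"

lemma conjugate_in_iff_conjugacy_class: "conjugate_in G a b \<longleftrightarrow> b \<in> conjugacy_class G a"
  by (auto simp: conjugate_in_def conjugacy_class_def)

lemma finite_p_group_subgroup:
  assumes "finite_p_group H p" and "Factorial_Ring.prime p" and "subgroup I H"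
  shows "finite_p_group (H\<lparr>carrier := I\<rparr>) p"
proof -
  interpret H: group H using assms(1) by (simp add: finite_p_group_def)
  obtain n where n: "order H = p ^ n" and fin: "finite (carrier H)"
    using assms(1) by (auto simp: finite_p_group_def order_def)
  have "card I dvd p ^ n" using H.lagrange[OF assms(3)] n by (metis dvd_triv_right)
  then obtain m where "card I = p ^ m" using divides_primepow_nat[OF assms(2)] by blast
  moreover have "finite I" using fin subgroup.subset[OF assms(3)] finite_subset by blast
  ultimately show ?thesis
    using H.subgroup_imp_group[OF assms(3)] by (auto simp: finite_p_group_def)
qed

lemma finite_p_group_iso:
  assumes "group G" and "\<phi> \<in> iso G H" and "finite_p_group H p"
  shows "finite_p_group G p"
proof -
  have "G \<cong> H" using assms(2) by (auto simp: is_iso_def)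
  then show ?thesis using assms iso_same_card iso_finite by (metis finite_p_group_def)
qed

lemma finite_p_group_DirProd:
  assumes "finite_p_group G p" and "finite_p_group H p"
  shows "finite_p_group (G \<times>\<times> H) p"
proof -
  obtain m n where "card (carrier G) = p ^ m" "card (carrier H) = p ^ n"
    using assms by (auto simp: finite_p_group_def)
  then have "card (carrier (G \<times>\<times> H)) = p ^ (m + n)"
    by (simp add: card_cartesian_product power_add)
  then show ?thesis using assms DirProd_group by (auto simp: finite_p_group_def)
qed

lemma (in normal) kernel_rcos_FactGroup: "kernel G (G Mod H) (\<lambda>x. H #> x) = H"
  using coset_join1[OF _ _ subgroup_axioms] rcos_const[OF is_group] subset
  by (auto simp: kernel_def)

lemma Fp_normal_subgroup_carrier:
  assumes "group G"
  shows "Fp_normal_subgroup G p (carrier G)"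
proof -
  interpret group G by fact
  have "carrier (G Mod carrier G) = {carrier G}"
    using coset_join2[OF _ subgroup_self] by (auto simp: carrier_FactGroup)
  then show ?thesis
    using normal_self normal.factorgroup_is_group[OF normal_self]
    by (auto simp: Fp_normal_subgroup_def finite_p_group_def intro: exI[of _ 0])
qed

lemma Fp_normal_subgroup_kernel:
  assumes "group G" and "Factorial_Ring.prime p" and "finite_p_group H p" and "h \<in> hom G H"
  shows "Fp_normal_subgroup G p (kernel G H h)"
proof -
  interpret group_hom G H h
    using assms by (simp add: group_hom_def group_hom_axioms_def finite_p_group_def)
  let ?I = "H\<lparr>carrier := h ` carrier G\<rparr>"
  have I: "finite_p_group ?I p" using finite_p_group_subgroup[OF assms(3,2) img_is_subgroup] .
  interpret image: group_hom G ?I h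
    using I assms(4) by (auto simp: group_hom_def group_hom_axioms_def finite_p_group_def hom_def)
  have "kernel G ?I h = kernel G H h" by (simp add: kernel_def)
  then have "(\<lambda>C. the_elem (h ` C)) \<in> iso (G Mod kernel G H h) ?I"
    using image.FactGroup_iso_set by simp
  then show ?thesis
    using finite_p_group_iso[OF normal.factorgroup_is_group[OF normal_kernel] _ I] normal_kernel
    by (simp add: Fp_normal_subgroup_def)
qed

lemma Fp_normal_subgroup_Int:
  assumes "group G" and "Factorial_Ring.prime p"
    and "Fp_normal_subgroup G p M" and "Fp_normal_subgroup G p N"
  shows "Fp_normal_subgroup G p (M \<inter> N)"
proof -
  interpret M: normal M G using assms(3) by (simp add: Fp_normal_subgroup_def)
  interpret N: normal N G using assms(4) by (simp add: Fp_normal_subgroup_def)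
  let ?h = "\<lambda>x. (M #>\<^bsub>G\<^esub> x, N #>\<^bsub>G\<^esub> x)"
  have hom: "?h \<in> hom G ((G Mod M) \<times>\<times> (G Mod N))"
    unfolding hom_pairwise using M.r_coset_hom_Mod N.r_coset_hom_Mod by (simp add: comp_def)
  have fin: "finite_p_group ((G Mod M) \<times>\<times> (G Mod N)) p"
    using assms(3,4) finite_p_group_DirProd unfolding Fp_normal_subgroup_def by blast
  have ker: "kernel G ((G Mod M) \<times>\<times> (G Mod N)) ?h = M \<inter> N"
    using M.kernel_rcos_FactGroup N.kernel_rcos_FactGroup by (auto simp: kernel_def)
  show ?thesis using Fp_normal_subgroup_kernel[OF assms(1,2) fin hom] unfolding ker .
qed

lemma (in group) residually_Fp_avoid_finite:
  assumes "Factorial_Ring.prime p" and "residually_Fp G p"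
    and "finite T" and "T \<subseteq> carrier G - {\<one>}"
  shows "\<exists>M. Fp_normal_subgroup G p M \<and> M \<inter> T = {}"
  using assms(3,4)
proof (induction T rule: finite_induct)
  case empty
  then show ?case using Fp_normal_subgroup_carrier[OF is_group] by blast
next
  case (insert t T)
  then obtain M where M: "Fp_normal_subgroup G p M" "M \<inter> T = {}" by blast
  obtain K :: "'a set monoid" and \<phi>
    where K: "finite_p_group K p" "\<phi> \<in> hom G K" "\<phi> t \<noteq> \<one>\<^bsub>K\<^esub>"
    using assms(2)[unfolded residually_Fp_def, rule_format, of t] insert.prems by blast
  have "Fp_normal_subgroup G p (kernel G K \<phi>)"
    using Fp_normal_subgroup_kernel[OF is_group assms(1) K(1,2)] .
  then have "Fp_normal_subgroup G p (M \<inter> kernel G K \<phi>)"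
    using Fp_normal_subgroup_Int[OF is_group assms(1) M(1)] by blast
  moreover have "(M \<inter> kernel G K \<phi>) \<inter> insert t T = {}" using M(2) K(3) by (auto simp: kernel_def)
  ultimately show ?case by blast
qed

lemma (in normal) conjugate_in_FactGroup_imp:
  assumes "a \<in> carrier G" and "b \<in> carrier G"
    and "conjugate_in (G Mod H) (H #> a) (H #> b)"
  shows "\<exists>c \<in> conjugacy_class G a. b \<otimes> inv c \<in> H"
proof -
  obtain C where C: "C \<in> carrier (G Mod H)"
      "H #> b = C \<otimes>\<^bsub>G Mod H\<^esub> (H #> a) \<otimes>\<^bsub>G Mod H\<^esub> inv\<^bsub>G Mod H\<^esub> C"
    using assms(3) unfolding conjugate_in_def by blast
  then obtain g where g: "g \<in> carrier G" "C = H #> g" by (auto simp: carrier_FactGroup)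
  let ?c = "g \<otimes> a \<otimes> inv g"
  have "H #> ?c = H #> b"
    using C g assms(1) by (simp add: inv_FactGroup rcos_inv rcos_sum)
  then have "b \<in> H #> ?c" by (rule repr_independenceD[OF subgroup_axioms assms(2)])
  then have "b \<otimes> inv ?c \<in> H" using rcos_module_imp[OF is_group] g assms(1) by simp
  moreover have "?c \<in> conjugacy_class G a" using g by (auto simp: conjugacy_class_def)
  ultimately show ?thesis by blast
qed

lemma (in normal) conjugacy_class_subset_rcos:
  assumes "comm_group (G Mod H)" and "a \<in> carrier G"
  shows "conjugacy_class G a \<subseteq> H #> a"
proof
  fix c assume "c \<in> conjugacy_class G a"
  then obtain g where g: "g \<in> carrier G" and c: "c = g \<otimes> a \<otimes> inv g"
    by (auto simp: conjugacy_class_def)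
  interpret Q: comm_group "G Mod H" by fact
  have "H #> c = (H #> g) <#> (H #> a) <#> (H #> inv g)"
    using g assms(2) by (simp add: c rcos_sum)
  also have "\<dots> = (H #> a) <#> ((H #> g) <#> (H #> inv g))"
    using g assms(2) Q.m_comm Q.m_assoc
    by (metis (no_types, lifting) carrier_FactGroup image_eqI inv_closed mult_FactGroup)
  also have "\<dots> = H #> a"
    using g assms(2) by (simp add: rcos_sum coset_mult_assoc)
  finally show "c \<in> H #> a"
    using repr_independenceD[OF subgroup_axioms, of c a] g assms(2) c by simp
qed

theorem (in group) conjugacy_Fp_separable_if_finite_conjugacy_classes:
  assumes "Factorial_Ring.prime p" and "residually_Fp G p"
    and "\<And>a. a \<in> carrier G \<Longrightarrow> finite (conjugacy_class G a)"
  shows "conjugacy_Fp_separable G p"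
  unfolding conjugacy_Fp_separable_def
proof (intro ballI impI)
  fix a b assume a: "a \<in> carrier G" and b: "b \<in> carrier G" and "\<not> conjugate_in G a b"
  then have "b \<notin> conjugacy_class G a" by (simp add: conjugate_in_iff_conjugacy_class)
  let ?T = "(\<lambda>c. b \<otimes> inv c) ` conjugacy_class G a"
  have T: "?T \<subseteq> carrier G - {\<one>}"
  proof
    fix t assume "t \<in> ?T"
    then obtain c where c: "c \<in> conjugacy_class G a" and t: "t = b \<otimes> inv c" by blast
    have "c \<in> carrier G" using c a by (auto simp: conjugacy_class_def)
    moreover have "c \<noteq> b" using c \<open>b \<notin> conjugacy_class G a\<close> by blast
    ultimately show "t \<in> carrier G - {\<one>}"
      using b by (simp add: t) (metis inv_closed inv_equality inv_inv)
  qed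
  obtain M where M: "Fp_normal_subgroup G p M" "M \<inter> ?T = {}"
    using residually_Fp_avoid_finite[OF assms(1,2) finite_imageI[OF assms(3)[OF a]] T] by blast
  interpret normal M G using M(1) by (simp add: Fp_normal_subgroup_def)
  have "\<not> conjugate_in (G Mod M) (M #> a) (M #> b)"
    using conjugate_in_FactGroup_imp[OF a b] M(2) by blast
  moreover have "finite_p_group (G Mod M) p" using M(1) by (simp add: Fp_normal_subgroup_def)
  moreover have "(\<lambda>x. M #> x) ` carrier G = carrier (G Mod M)" by (simp add: carrier_FactGroup)
  ultimately show "\<exists>(K :: 'a set monoid) \<phi>. finite_p_group K p \<and> \<phi> \<in> hom G K \<and>
      \<phi> ` carrier G = carrier K \<and> \<not> conjugate_in K (\<phi> a) (\<phi> b)"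
    using r_coset_hom_Mod by blast
qed

theorem proposition4:
  fixes G :: "('a, 'c) monoid_scheme" and F :: "'a set" and p :: nat
  assumes "group G"
    and "F \<lhd> G"
    and "finite F"
    and "comm_group (G Mod F)"
    and "finitely_generated_group (G Mod F)"
    and "Factorial_Ring.prime p"
    and "residually_Fp G p"
  shows "conjugacy_Fp_separable G p"
proof (rule group.conjugacy_Fp_separable_if_finite_conjugacy_classes[OF assms(1,6,7)])
  fix a assume "a \<in> carrier G"
  then have "conjugacy_class G a \<subseteq> F #>\<^bsub>G\<^esub> a"
    by (rule normal.conjugacy_class_subset_rcos[OF assms(2,4)])
  moreover have "finite (F #>\<^bsub>G\<^esub> a)" using assms(3) by (simp add: r_coset_def)
  ultimately show "finite (conjugacy_class G a)" by (rule finite_subset)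
qed

end
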